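(* There is a positive constant $C$ such that for infinitely many positive integers $n$, $$ D(n) > 1 - \frac{C}{(\log\log n)^{1-\frac12 e\log 2}}. $$ (Here $1-\frac12 e\log 2\approx 0.057915$.)
   Context: A subset $S\subseteq \mathbb{Z}/n\mathbb{Z}$ is called product-free if there are no $a,b,c\in S$ (not necessarily distinct) with $ab\equiv c \pmod n$. For a positive integer $n$, $D(n)$ denotes the maximum of $|S|/n$ over all product-free subsets $S$ of $\mathbb{Z}/n\mathbb{Z}$. Here $e$ is Euler's number and $\log$ is the natural logarithm. *)

theory Defs
  imports Complex_Main
begin

definition product_free :: "nat \<Rightarrow> nat set \<Rightarrow> bool" where
  "product_free n S \<longleftrightarrow> S \<subseteq> {0..<n} \<and>
     (\<forall>a\<in>S. \<forall>b\<in>S. \<forall>c\<in>S. (a * b) mod n \<noteq> c mod n)"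

definition D :: "nat \<Rightarrow> real" where
  "D n = Max ((\<lambda>S. real (card S) / real n) ` {S. product_free n S})"

end

theory Submission
  imports Defs "HOL-Analysis.Harmonic_Numbers" "HOL-Number_Theory.Cong"
    "HOL-Computational_Algebra.Primes" "HOL-Library.FuncSet"
begin

(* Fix a finite set A of primes and K \<ge> 1, and put n = \<Prod>p\<in>A. p^K.  For a residue
   x mod n let  w(x) = \<Sum>p\<in>A. min (v_p x) K  (the capped valuations only depend on x mod p^K).
   If K \<ge> 4a, the band S = {x. a < w x \<le> 2a} is product-free: capped valuations add under
   multiplication as long as the sum stays below K, so w(xy) \<ge> w(x) + w(y) > 2a.
   By the Chinese remainder theorem, \<Sum>x<n. q^w(x) factors as a product of local sums over
   Z/p^K, which are explicitly computable; Chernoff's bound with q = e/2 (upper tail) and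
   q = e/4 (lower tail) and the choice a = (e/4) \<mu>, where \<mu> = \<Sum>p\<in>A. 1/p, shows that both tails
   have density O(exp(-\<alpha> \<mu>)) with \<alpha> = 1 - e log 2 / 2.  Hence 1 - D n = O(exp(-\<alpha> \<mu>)).
   Finally, for A = the primes up to P, an Euler-product argument gives \<mu> \<ge> log log P - 2,
   while log log n = O(log P); so 1 - D n = O((log log n)^(-\<alpha>)) for infinitely many n. *)

section \<open>Capped valuations\<close>

text \<open>\<open>capped_val p K r = min (v\<^sub>p r) K\<close>, with the convention \<open>v\<^sub>p 0 = \<infinity>\<close>.\<close>
fun capped_val :: "nat \<Rightarrow> nat \<Rightarrow> nat \<Rightarrow> nat" where
  "capped_val p 0 r = 0"
| "capped_val p (Suc K) r = (if p dvd r then Suc (capped_val p K (r div p)) else 0)"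

lemma capped_val_le: "capped_val p K r \<le> K"
  by (induction K arbitrary: r) auto

lemma pow_capped_val_dvd: "p ^ capped_val p K r dvd r"
proof (induction K arbitrary: r)
  case (Suc K)
  show ?case
  proof (cases "p dvd r \<and> p \<noteq> 0")
    case True
    then obtain m where "r = p * m" by auto
    then show ?thesis using Suc[of m] True by (simp add: mult_dvd_mono)
  qed auto
qed simp

lemma capped_val_ge:
  assumes "j \<le> K" "p ^ j dvd r" "p > 0"
  shows "j \<le> capped_val p K r"
  using assms
proof (induction K arbitrary: j r)
  case (Suc K)
  show ?case
  proof (cases j)
    case (Suc j')
    with Suc.prems obtain m where m: "r = p * (p ^ j' * m)"
      by (auto simp: dvd_def mult.assoc)
    then have "j' \<le> capped_val p K (r div p)"
      using Suc.IH[of j' "r div p"] Suc.prems \<open>j = Suc j'\<close> by simp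
    then show ?thesis using m \<open>j = Suc j'\<close> by simp
  qed simp
qed simp

lemma capped_val_mod:
  assumes "p ^ K dvd m" "p > 0"
  shows "capped_val p K (r mod m) = capped_val p K r"
proof -
  have "p ^ capped_val p K s dvd m" for s
    using assms(1) le_imp_power_dvd[OF capped_val_le] dvd_trans by blast
  then show ?thesis
    by (meson antisym capped_val_ge capped_val_le pow_capped_val_dvd dvd_mod_iff assms(2))
qed

definition local_moment :: "nat \<Rightarrow> real \<Rightarrow> nat \<Rightarrow> real" where
  "local_moment p q K = (\<Sum>r<p^K. q ^ capped_val p K r)"

text \<open>Residues prime to \<open>p\<close> contribute 1 each; multiples \<open>p t\<close> contribute \<open>q\<close> times the level-\<open>K\<close> term of \<open>t\<close>.\<close>
lemma local_moment_Suc: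
  assumes p: "p \<ge> 2"
  shows "local_moment p q (Suc K) = (real p ^ Suc K - real p ^ K) + q * local_moment p q K"
proof -
  let ?f = "\<lambda>r. q ^ capped_val p (Suc K) r"
  let ?I = "{..<p ^ Suc K}"
  let ?D = "{r\<in>?I. p dvd r}" and ?N = "{r\<in>?I. \<not> p dvd r}"
  have IDN: "?I = ?D \<union> ?N" by auto
  have split: "local_moment p q (Suc K) = sum ?f ?D + sum ?f ?N"
    unfolding local_moment_def by (subst IDN, rule sum.union_disjoint) auto
  have Dimg: "?D = (\<lambda>t. p * t) ` {..<p^K}"
  proof
    show "?D \<subseteq> (\<lambda>t. p * t) ` {..<p^K}"
    proof
      fix r assume "r \<in> ?D"
      then obtain t where t: "r = p * t" and "r < p * p^K" by auto
      then have "t < p^K" using p by simp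
      then show "r \<in> (\<lambda>t. p * t) ` {..<p^K}" using t by auto
    qed
  qed (use p in auto)
  have injp: "inj_on (\<lambda>t. p * t) {..<p^K}" using p by (auto simp: inj_on_def)
  have cardD: "card ?D = p ^ K" using Dimg injp by (simp add: card_image)
  have "sum ?f ?D = (\<Sum>t<p^K. q * q ^ capped_val p K t)"
    using Dimg injp p by (simp add: sum.reindex)
  also have "\<dots> = q * local_moment p q K" by (simp add: local_moment_def sum_distrib_left)
  finally have sD: "sum ?f ?D = q * local_moment p q K" .
  have "card ?I = card ?D + card ?N" by (subst IDN, rule card_Un_disjoint) auto
  then have "card ?N = p ^ Suc K - p ^ K" using cardD by simp
  moreover have "p ^ K \<le> p ^ Suc K" using p by simp
  ultimately have sN: "sum ?f ?N = real p ^ Suc K - real p ^ K"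
    by (simp add: of_nat_diff)
  show ?thesis using split sD sN by simp
qed

text \<open>For \<open>1 \<le> q < p\<close>: the local sum is at most \<open>p\<^sup>K (p - 1)/(p - q)\<close> (the value as \<open>K \<rightarrow> \<infinity>\<close>).\<close>
lemma local_moment_upper:
  assumes p: "p \<ge> 2" and q: "1 \<le> q" "q < real p"
  shows "local_moment p q K \<le> real p ^ K * ((real p - 1) / (real p - q))"
proof (induction K)
  case 0 then show ?case using q by (simp add: local_moment_def)
next
  case (Suc K)
  have "local_moment p q (Suc K) = (real p ^ Suc K - real p ^ K) + q * local_moment p q K"
    by (rule local_moment_Suc[OF p])
  also have "\<dots> \<le> (real p ^ Suc K - real p ^ K) + q * (real p ^ K * ((real p - 1) / (real p - q)))"
    using Suc q by (intro add_left_mono mult_left_mono) auto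
  also have "\<dots> = real p ^ Suc K * ((real p - 1) / (real p - q))"
    using q by (simp add: field_simps)
  finally show ?case .
qed

text \<open>For \<open>0 \<le> q \<le> 1\<close> and \<open>K \<ge> 1\<close>: only the residues prime to \<open>p\<close> count fully.\<close>
lemma local_moment_small_q:
  assumes p: "p \<ge> 2" and q: "0 \<le> q" "q \<le> 1" and K: "K \<ge> 1"
  shows "local_moment p q K \<le> real p ^ K * (1 - (1 - q) / real p)"
proof -
  obtain K' where K': "K = Suc K'" using K by (cases K) auto
  have trivial: "local_moment p q K' \<le> real p ^ K'"
    using sum_mono[of "{..<p^K'}" "\<lambda>r. q ^ capped_val p K' r" "\<lambda>_. 1"] q
    by (simp add: local_moment_def power_le_one)
  have "local_moment p q K = (real p ^ Suc K' - real p ^ K') + q * local_moment p q K'"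
    unfolding K' by (rule local_moment_Suc[OF p])
  also have "\<dots> \<le> (real p ^ Suc K' - real p ^ K') + q * real p ^ K'"
    using trivial q by (intro add_left_mono mult_left_mono) auto
  also have "\<dots> = real p ^ K * (1 - (1 - q) / real p)"
    using p unfolding K' by (simp add: field_simps)
  finally show ?thesis .
qed

section \<open>Factorisation by the Chinese remainder theorem\<close>

lemma sum_mod_coprime:
  fixes F :: "nat \<Rightarrow> nat \<Rightarrow> real"
  assumes cop: "coprime a b" and a: "a > 0" and b: "b > 0"
  shows "(\<Sum>x<a*b. F (x mod a) (x mod b)) = (\<Sum>r<a. \<Sum>s<b. F r s)"
proof -
  let ?h = "\<lambda>x. (x mod a, x mod b)"
  have inj: "inj_on ?h {..<a*b}"
  proof (rule inj_onI)
    fix x y assume x: "x \<in> {..<a*b}" and y: "y \<in> {..<a*b}" and e: "?h x = ?h y"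
    then have "[x = y] (mod a*b)"
      by (intro coprime_cong_mult_nat[OF _ _ cop]) (auto simp: cong_def)
    then show "x = y" using x y cong_less_modulus_unique_nat by auto
  qed
  have sub: "?h ` {..<a*b} \<subseteq> {..<a} \<times> {..<b}" using a b by auto
  have "card (?h ` {..<a*b}) = card ({..<a} \<times> {..<b})"
    using card_image[OF inj] by (simp add: card_cartesian_product)
  then have img: "?h ` {..<a*b} = {..<a} \<times> {..<b}"
    using sub by (intro card_subset_eq) auto
  have "(\<Sum>x<a*b. F (x mod a) (x mod b)) = (\<Sum>z\<in>?h ` {..<a*b}. case_prod F z)"
    using sum.reindex[OF inj, of "case_prod F"] by simp
  also have "\<dots> = (\<Sum>r<a. \<Sum>s<b. F r s)" by (simp only: img sum.cartesian_product)
  finally show ?thesis .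
qed

lemma sum_prod_residues:
  fixes f :: "nat \<Rightarrow> nat \<Rightarrow> real"
  assumes "finite A" "\<forall>p\<in>A. prime p"
  shows "(\<Sum>x<(\<Prod>p\<in>A. p^K). \<Prod>p\<in>A. f p (x mod p^K)) = (\<Prod>p\<in>A. \<Sum>r<p^K. f p r)"
  using assms
proof (induction A rule: finite_induct)
  case (insert q A)
  let ?m = "\<Prod>p\<in>A. p^K"
  have qp: "prime q" using insert by simp
  have m0: "?m > 0" using insert by (auto intro!: prod_pos simp: prime_gt_0_nat)
  have q0: "q^K > 0" using qp prime_gt_0_nat by simp
  have cop: "coprime (q^K) ?m"
  proof (rule prod_coprime_right)
    fix p assume "p \<in> A"
    then have "coprime q p" using insert qp by (intro primes_coprime) auto
    then show "coprime (q^K) (p^K)" by simp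
  qed
  have eq: "(\<Prod>p\<in>A. f p (x mod p^K)) = (\<Prod>p\<in>A. f p ((x mod ?m) mod p^K))" for x
  proof (rule prod.cong[OF refl])
    fix p assume "p \<in> A"
    then have "p^K dvd ?m" using insert.hyps(1) by (intro dvd_prodI) auto
    then show "f p (x mod p^K) = f p ((x mod ?m) mod p^K)" by (simp add: mod_mod_cancel)
  qed
  have "(\<Sum>x<(\<Prod>p\<in>insert q A. p^K). \<Prod>p\<in>insert q A. f p (x mod p^K))
      = (\<Sum>x<q^K * ?m. f q (x mod q^K) * (\<Prod>p\<in>A. f p (x mod p^K)))"
    using insert.hyps by simp
  also have "\<dots> = (\<Sum>x<q^K * ?m. f q (x mod q^K) * (\<Prod>p\<in>A. f p ((x mod ?m) mod p^K)))"
    by (intro sum.cong refl arg_cong2[where f="(*)"] eq)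
  also have "\<dots> = (\<Sum>r<q^K. \<Sum>s<?m. f q r * (\<Prod>p\<in>A. f p (s mod p^K)))"
    by (rule sum_mod_coprime[OF cop q0 m0])
  also have "\<dots> = (\<Sum>r<q^K. f q r) * (\<Sum>s<?m. \<Prod>p\<in>A. f p (s mod p^K))"
    by (simp add: sum_product)
  also have "\<dots> = (\<Prod>p\<in>insert q A. \<Sum>r<p^K. f p r)"
    using insert by simp
  finally show ?case .
qed simp

section \<open>The weight and the product-free band\<close>

definition modulus :: "nat set \<Rightarrow> nat \<Rightarrow> nat" where
  "modulus A K = (\<Prod>p\<in>A. p ^ K)"

definition weight :: "nat set \<Rightarrow> nat \<Rightarrow> nat \<Rightarrow> nat" where
  "weight A K x = (\<Sum>p\<in>A. capped_val p K x)"

lemma modulus_pos: "\<forall>p\<in>A. prime p \<Longrightarrow> modulus A K > 0"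
  unfolding modulus_def by (auto intro!: prod_pos simp: prime_gt_0_nat)

lemma pow_dvd_modulus: "finite A \<Longrightarrow> p \<in> A \<Longrightarrow> p ^ K dvd modulus A K"
  unfolding modulus_def by (rule dvd_prodI)

lemma member_le_modulus:
  assumes "finite A" "\<forall>p\<in>A. prime p" "p \<in> A" "K \<ge> 1"
  shows "p \<le> modulus A K"
proof -
  have "p \<le> p ^ K" using assms prime_gt_0_nat[of p] by (intro self_le_power) auto
  also have "\<dots> \<le> modulus A K" using assms by (intro dvd_imp_le pow_dvd_modulus modulus_pos)
  finally show ?thesis .
qed

lemma weight_moment_sum:
  assumes A: "finite A" "\<forall>p\<in>A. prime p"
  shows "(\<Sum>x<modulus A K. q ^ weight A K x) = (\<Prod>p\<in>A. local_moment p q K)"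
proof -
  have "q ^ weight A K x = (\<Prod>p\<in>A. q ^ capped_val p K (x mod p^K))" for x
    unfolding weight_def power_sum using A prime_gt_0_nat
    by (intro prod.cong refl) (simp add: capped_val_mod)
  then have "(\<Sum>x<modulus A K. q ^ weight A K x)
      = (\<Sum>x<modulus A K. \<Prod>p\<in>A. q ^ capped_val p K (x mod p^K))" by simp
  also have "\<dots> = (\<Prod>p\<in>A. \<Sum>r<p^K. q ^ capped_val p K r)"
    unfolding modulus_def by (rule sum_prod_residues[OF A])
  finally show ?thesis unfolding local_moment_def .
qed

text \<open>If \<open>4a \<le> K\<close>, the residues of weight in \<open>(a, 2a]\<close> form a product-free set: for \<open>x, y\<close> in the band,
  \<open>v\<^sub>p x + v\<^sub>p y \<le> K\<close>, so the capped valuations add and \<open>xy\<close> has weight \<open>> 2a\<close>.\<close>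
lemma weight_band_product_free:
  assumes A: "finite A" "\<forall>p\<in>A. prime p" and K: "4 * a \<le> real K"
  shows "product_free (modulus A K)
           {x\<in>{..<modulus A K}. a < real (weight A K x) \<and> real (weight A K x) \<le> 2 * a}"
    (is "product_free ?n ?S")
proof -
  have "(x * y) mod ?n \<noteq> c mod ?n" if x: "x \<in> ?S" and y: "y \<in> ?S" and c: "c \<in> ?S" for x y c
  proof
    assume e: "(x * y) mod ?n = c mod ?n"
    have additive: "capped_val p K x + capped_val p K y \<le> capped_val p K c" if p: "p \<in> A" for p
    proof -
      have p0: "p > 0" using p A prime_gt_0_nat by auto
      have "capped_val p K x \<le> weight A K x" "capped_val p K y \<le> weight A K y"
        unfolding weight_def using p A(1) by (auto intro: member_le_sum)
      then have le: "capped_val p K x + capped_val p K y \<le> K" using x y K by simp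
      have "p ^ (capped_val p K x + capped_val p K y) dvd x * y"
        by (simp add: power_add mult_dvd_mono pow_capped_val_dvd)
      then have "capped_val p K x + capped_val p K y \<le> capped_val p K (x * y)"
        using capped_val_ge le p0 by blast
      also have "\<dots> = capped_val p K ((x * y) mod ?n)"
        using capped_val_mod[OF pow_dvd_modulus[OF A(1) p] p0] by simp
      also have "\<dots> = capped_val p K c" using e c by simp
      finally show ?thesis .
    qed
    have "weight A K x + weight A K y \<le> weight A K c"
      unfolding weight_def sum.distrib[symmetric] by (rule sum_mono) (rule additive)
    then show False using x y c by simp
  qed
  then show ?thesis unfolding product_free_def by auto
qed

lemma card_div_le_D:
  assumes "product_free n S" "n > 0"
  shows "real (card S) / real n \<le> D n"
proof -
  have "finite {S. product_free n S}"
    by (rule finite_subset[of _ "Pow {0..<n}"]) (auto simp: product_free_def)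
  then show ?thesis unfolding D_def using assms by (intro Max_ge) auto
qed

section \<open>Chernoff bounds for the tails of the weight\<close>

lemma power_as_exp: "q > 0 \<Longrightarrow> q ^ m = exp (real m * ln q)"
  by (simp add: exp_of_nat_mult)

lemma card_mul_le_sum:
  fixes f :: "nat \<Rightarrow> real"
  assumes "finite X" "Y \<subseteq> X" "\<And>x. x \<in> X \<Longrightarrow> f x \<ge> 0" "\<And>x. x \<in> Y \<Longrightarrow> f x \<ge> c"
  shows "real (card Y) * c \<le> (\<Sum>x\<in>X. f x)"
proof -
  have "real (card Y) * c = (\<Sum>x\<in>Y. c)" by simp
  also have "\<dots> \<le> (\<Sum>x\<in>Y. f x)" using assms(4) by (rule sum_mono)
  also have "\<dots> \<le> (\<Sum>x\<in>X. f x)" using assms by (intro sum_mono2) auto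
  finally show ?thesis .
qed

lemma upper_tail_count:
  assumes A: "finite A" "\<forall>p\<in>A. prime p" and q: "1 \<le> q" "q < 2"
  shows "real (card {x\<in>{..<modulus A K}. b < real (weight A K x)}) * exp (b * ln q)
    \<le> real (modulus A K) * (\<Prod>p\<in>A. (real p - 1) / (real p - q))"
proof -
  have "real (card {x\<in>{..<modulus A K}. b < real (weight A K x)}) * exp (b * ln q)
          \<le> (\<Sum>x<modulus A K. q ^ weight A K x)"
  proof (rule card_mul_le_sum)
    fix x assume "x \<in> {x\<in>{..<modulus A K}. b < real (weight A K x)}"
    then have "b * ln q \<le> real (weight A K x) * ln q" using q by (intro mult_right_mono) auto
    then show "exp (b * ln q) \<le> q ^ weight A K x" using q by (simp add: power_as_exp)
  qed (use q in auto)
  also have "\<dots> = (\<Prod>p\<in>A. local_moment p q K)" by (rule weight_moment_sum[OF A])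
  also have "\<dots> \<le> (\<Prod>p\<in>A. real p ^ K * ((real p - 1) / (real p - q)))"
  proof (rule prod_mono, rule conjI)
    fix p assume "p \<in> A"
    then have p: "p \<ge> 2" using A prime_ge_2_nat by auto
    show "0 \<le> local_moment p q K" unfolding local_moment_def using q by (intro sum_nonneg) auto
    show "local_moment p q K \<le> real p ^ K * ((real p - 1) / (real p - q))"
      using p q by (intro local_moment_upper) auto
  qed
  also have "\<dots> = real (modulus A K) * (\<Prod>p\<in>A. (real p - 1) / (real p - q))"
    by (simp only: modulus_def of_nat_prod of_nat_power prod.distrib)
  finally show ?thesis .
qed

lemma lower_tail_count:
  assumes A: "finite A" "\<forall>p\<in>A. prime p" and q: "0 < q" "q \<le> 1" and K: "K \<ge> 1"
  shows "real (card {x\<in>{..<modulus A K}. real (weight A K x) \<le> b}) * exp (b * ln q)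
    \<le> real (modulus A K) * (\<Prod>p\<in>A. 1 - (1 - q) / real p)"
proof -
  have "real (card {x\<in>{..<modulus A K}. real (weight A K x) \<le> b}) * exp (b * ln q)
          \<le> (\<Sum>x<modulus A K. q ^ weight A K x)"
  proof (rule card_mul_le_sum)
    fix x assume "x \<in> {x\<in>{..<modulus A K}. real (weight A K x) \<le> b}"
    then have "b * ln q \<le> real (weight A K x) * ln q" using q by (intro mult_right_mono_neg) auto
    then show "exp (b * ln q) \<le> q ^ weight A K x" using q by (simp add: power_as_exp)
  qed (use q in auto)
  also have "\<dots> = (\<Prod>p\<in>A. local_moment p q K)" by (rule weight_moment_sum[OF A])
  also have "\<dots> \<le> (\<Prod>p\<in>A. real p ^ K * (1 - (1 - q) / real p))"
  proof (rule prod_mono, rule conjI)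
    fix p assume "p \<in> A"
    then have p: "p \<ge> 2" using A prime_ge_2_nat by auto
    show "0 \<le> local_moment p q K" unfolding local_moment_def using q by (intro sum_nonneg) auto
    show "local_moment p q K \<le> real p ^ K * (1 - (1 - q) / real p)"
      using p q K by (intro local_moment_small_q) auto
  qed
  also have "\<dots> = real (modulus A K) * (\<Prod>p\<in>A. 1 - (1 - q) / real p)"
    by (simp only: modulus_def of_nat_prod of_nat_power prod.distrib)
  finally show ?thesis .
qed

section \<open>Estimates for the Euler-type products\<close>

lemma two_le_e: "2 \<le> exp (1::real)"
  using exp_ge_add_one_self[of 1] by simp

lemma euler_factor_upper:
  fixes p q :: real
  assumes p: "p \<ge> 2" and q: "1 \<le> q" "q \<le> 136/100"
  shows "(p - 1) / (p - q) \<le> exp ((q - 1) / p + 4 / p ^ 2)"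
proof -
  have pq: "p - q > 0" and p0: "p > 0" using p q by linarith+
  have "(q - 1) / (p - q) \<le> (q - 1) / p + 4 / p ^ 2"
  proof -
    have qq: "(q - 1) * q \<le> (36/100) * (136/100)" using q by (intro mult_mono) auto
    have "p * p / 4 \<le> p * (p - q)" using p0 p q mult_left_mono[of "p/4" "p - q" p] by simp
    then have "((q - 1) * q) / (p * (p - q)) \<le> 1 / (p * p / 4)"
      using qq q p0 by (intro frac_le) auto
    moreover have "(q - 1) / (p - q) = (q - 1) / p + ((q - 1) * q) / (p * (p - q))"
      using pq p0 by (simp add: field_simps)
    ultimately show ?thesis by (simp add: power2_eq_square)
  qed
  moreover have "(p - 1) / (p - q) = 1 + (q - 1) / (p - q)" using pq by (simp add: field_simps)
  ultimately show ?thesis using exp_ge_add_one_self[of "(q - 1) / (p - q)"] by (smt (verit) exp_le_cancel_iff)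
qed

lemma euler_product_upper:
  assumes A: "finite A" "\<forall>p\<in>A. prime p" and q: "1 \<le> q" "q \<le> 136/100"
  shows "(\<Prod>p\<in>A. (real p - 1) / (real p - q))
           \<le> exp ((q - 1) * (\<Sum>p\<in>A. 1 / real p) + 4 * (\<Sum>p\<in>A. 1 / real p ^ 2))"
proof -
  have "(\<Prod>p\<in>A. (real p - 1) / (real p - q)) \<le> (\<Prod>p\<in>A. exp ((q - 1) / real p + 4 / real p ^ 2))"
  proof (rule prod_mono, rule conjI)
    fix p assume "p \<in> A"
    then have p: "real p \<ge> 2" using A prime_ge_2_nat by force
    show "0 \<le> (real p - 1) / (real p - q)" using p q by (intro divide_nonneg_nonneg) auto
    show "(real p - 1) / (real p - q) \<le> exp ((q - 1) / real p + 4 / real p ^ 2)"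
      by (rule euler_factor_upper[OF p q])
  qed
  also have "\<dots> = exp ((q - 1) * (\<Sum>p\<in>A. 1 / real p) + 4 * (\<Sum>p\<in>A. 1 / real p ^ 2))"
    using A(1) by (simp add: exp_sum[symmetric] sum.distrib sum_distrib_left)
  finally show ?thesis .
qed

lemma euler_product_lower:
  assumes A: "finite A" "\<forall>p\<in>A. prime p" and t: "0 \<le> t" "t \<le> 1"
  shows "(\<Prod>p\<in>A. 1 - (1 - t) / real p) \<le> exp (- (1 - t) * (\<Sum>p\<in>A. 1 / real p))"
proof -
  have "(\<Prod>p\<in>A. 1 - (1 - t) / real p) \<le> (\<Prod>p\<in>A. exp (- ((1 - t) / real p)))"
  proof (rule prod_mono, rule conjI)
    fix p assume "p \<in> A"
    then have p: "real p \<ge> 2" using A prime_ge_2_nat by force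
    then show "0 \<le> 1 - (1 - t) / real p" using t by simp
    show "1 - (1 - t) / real p \<le> exp (- ((1 - t) / real p))"
      using exp_ge_add_one_self[of "- ((1 - t) / real p)"] by simp
  qed
  also have "\<dots> = exp (- (1 - t) * (\<Sum>p\<in>A. 1 / real p))"
    using A(1) by (simp add: exp_sum[symmetric] sum_distrib_left sum_negf[symmetric] minus_divide_left)
  finally show ?thesis .
qed

definition alpha :: real where
  "alpha = 1 - exp 1 * ln 2 / 2"

lemma alpha_bounds: "0 < alpha" "alpha \<le> 1"
proof -
  have "exp 1 * ln 2 \<le> (272/100) * (25/36::real)"
    using e_less_272 ln2_le_25_over_36 by (intro mult_mono) auto
  then show "0 < alpha" unfolding alpha_def by simp
  show "alpha \<le> 1" unfolding alpha_def by simp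
qed

lemma upper_tail_bound:
  assumes A: "finite A" "\<forall>p\<in>A. prime p" and sq: "(\<Sum>p\<in>A. 1 / real p ^ 2) \<le> 1"
  defines "\<mu> \<equiv> \<Sum>p\<in>A. 1 / real p"
  shows "real (card {x\<in>{..<modulus A K}. exp 1 / 2 * \<mu> < real (weight A K x)})
           \<le> real (modulus A K) * (exp 4 * exp (- alpha * \<mu>))"
proof -
  define q where "q = exp 1 / (2::real)"
  define c where "c = card {x\<in>{..<modulus A K}. q * \<mu> < real (weight A K x)}"
  have q: "1 \<le> q" "q \<le> 136/100" using two_le_e e_less_272 unfolding q_def by auto
  have "real c * exp (q * \<mu> * ln q) \<le> real (modulus A K) * (\<Prod>p\<in>A. (real p - 1) / (real p - q))"
    unfolding c_def by (rule upper_tail_count[OF A]) (use q in auto)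
  also have "\<dots> \<le> real (modulus A K) * exp ((q - 1) * \<mu> + 4)"
    using euler_product_upper[OF A q] sq q unfolding \<mu>_def
    by (intro mult_left_mono) (auto intro: order.trans)
  finally have "real c \<le> real (modulus A K) * exp ((q - 1) * \<mu> + 4) / exp (q * \<mu> * ln q)"
    by (simp add: field_simps)
  also have "\<dots> = real (modulus A K) * exp ((q - 1) * \<mu> + 4 - q * \<mu> * ln q)"
    by (simp add: exp_diff)
  also have "(q - 1) * \<mu> + 4 - q * \<mu> * ln q = 4 + - alpha * \<mu>"
    unfolding alpha_def q_def by (simp add: ln_div field_simps)
  finally show ?thesis unfolding c_def q_def by (simp add: exp_add[symmetric])
qed

lemma lower_tail_bound:
  assumes A: "finite A" "\<forall>p\<in>A. prime p" and K: "K \<ge> 1"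
  defines "\<mu> \<equiv> \<Sum>p\<in>A. 1 / real p"
  shows "real (card {x\<in>{..<modulus A K}. real (weight A K x) \<le> exp 1 / 4 * \<mu>})
           \<le> real (modulus A K) * exp (- alpha * \<mu>)"
proof -
  define t where "t = exp 1 / (4::real)"
  define c where "c = card {x\<in>{..<modulus A K}. real (weight A K x) \<le> t * \<mu>}"
  have t: "0 < t" "t \<le> 1" using e_less_272 unfolding t_def by auto
  have ln4: "ln (4::real) = 2 * ln 2"
    using ln_realpow[of 2 2] by simp
  have "real c * exp (t * \<mu> * ln t) \<le> real (modulus A K) * (\<Prod>p\<in>A. 1 - (1 - t) / real p)"
    unfolding c_def by (rule lower_tail_count[OF A t K])
  also have "\<dots> \<le> real (modulus A K) * exp (- (1 - t) * \<mu>)"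
    using euler_product_lower[OF A] t unfolding \<mu>_def by (intro mult_left_mono) auto
  finally have "real c \<le> real (modulus A K) * exp (- (1 - t) * \<mu>) / exp (t * \<mu> * ln t)"
    by (simp add: field_simps)
  also have "\<dots> = real (modulus A K) * exp (- (1 - t) * \<mu> - t * \<mu> * ln t)"
    by (simp add: exp_diff)
  also have "- (1 - t) * \<mu> - t * \<mu> * ln t = - alpha * \<mu>"
    unfolding alpha_def t_def by (simp add: ln_div ln4 field_simps)
  finally show ?thesis unfolding c_def t_def .
qed

text \<open>The main estimate: with \<open>K \<ge> e \<mu>\<close>, the band \<open>((e/4) \<mu>, (e/2) \<mu>]\<close> is product-free and misses
  only a proportion \<open>(e\<^sup>4 + 1) exp (-\<alpha> \<mu>)\<close> of the residues modulo \<open>\<Prod>\<^sub>p\<^sub>\<in>\<^sub>A p\<^sup>K\<close>.\<close>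
lemma deficit_bound:
  assumes A: "finite A" "\<forall>p\<in>A. prime p" "(\<Sum>p\<in>A. 1 / real p ^ 2) \<le> 1"
    and K: "K \<ge> 1" "exp 1 * (\<Sum>p\<in>A. 1 / real p) \<le> real K"
  shows "1 - D (modulus A K) \<le> (exp 4 + 1) * exp (- alpha * (\<Sum>p\<in>A. 1 / real p))"
proof -
  define \<mu> where "\<mu> = (\<Sum>p\<in>A. 1 / real p)"
  define a where "a = exp 1 / 4 * \<mu>"
  define n where "n = modulus A K"
  define w where "w = weight A K"
  define S where "S = {x\<in>{..<n}. a < real (w x) \<and> real (w x) \<le> 2 * a}"
  define U where "U = {x\<in>{..<n}. exp 1 / 2 * \<mu> < real (w x)}"
  define L where "L = {x\<in>{..<n}. real (w x) \<le> exp 1 / 4 * \<mu>}"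
  have n0: "n > 0" unfolding n_def using A(2) by (rule modulus_pos)
  have "product_free n S"
    unfolding S_def n_def w_def using K(2) by (intro weight_band_product_free A) (simp add: a_def \<mu>_def)
  then have DS: "real (card S) / real n \<le> D n" using n0 by (rule card_div_le_D)
  have "{..<n} \<subseteq> S \<union> U \<union> L" unfolding S_def U_def L_def a_def by (auto simp: field_simps)
  then have "n \<le> card (S \<union> U \<union> L)"
    using card_mono[of "S \<union> U \<union> L" "{..<n}"] by (simp add: S_def U_def L_def)
  also have "\<dots> \<le> card S + card U + card L" by (meson card_Un_le add_right_mono le_trans)
  finally have "real n \<le> real (card S) + real (card U) + real (card L)" by linarith
  moreover have "real (card U) \<le> real n * (exp 4 * exp (- alpha * \<mu>))"
    unfolding U_def n_def w_def \<mu>_def by (rule upper_tail_bound[OF A])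
  moreover have "real (card L) \<le> real n * exp (- alpha * \<mu>)"
    unfolding L_def n_def w_def \<mu>_def by (rule lower_tail_bound[OF A(1,2) K(1)])
  ultimately have "1 - real (card S) / real n \<le> (exp 4 + 1) * exp (- alpha * \<mu>)"
    using n0 by (simp add: field_simps)
  then show ?thesis using DS unfolding n_def \<mu>_def by linarith
qed

section \<open>The primes up to \<open>P\<close>\<close>

definition primes_upto :: "nat \<Rightarrow> nat set" where
  "primes_upto P = {p. prime p \<and> p \<le> P}"

lemma primes_upto_finite: "finite (primes_upto P)"
  unfolding primes_upto_def by auto

text \<open>Telescoping: \<open>1/k\<^sup>2 \<le> 1/(k - 1) - 1/k\<close>.\<close>
lemma sum_inverse_squares_le: "N \<ge> 1 \<Longrightarrow> (\<Sum>k\<in>{2..N}. 1 / real k ^ 2) \<le> 1 - 1 / real N"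
proof (induction N rule: dec_induct)
  case (step N)
  have N: "real N \<ge> 1" using step by simp
  have "1 / real (Suc N) ^ 2 \<le> 1 / (real N * real (Suc N))"
    using N by (intro divide_left_mono) (auto simp: power2_eq_square)
  also have "\<dots> = 1 / real N - 1 / real (Suc N)"
    using N by (simp add: field_simps)
  finally have new_term: "1 / real (Suc N) ^ 2 \<le> 1 / real N - 1 / real (Suc N)" .
  have "{2..Suc N} = insert (Suc N) {2..N}" using step.hyps by auto
  then have "(\<Sum>k\<in>{2..Suc N}. 1 / real k ^ 2) = 1 / real (Suc N) ^ 2 + (\<Sum>k\<in>{2..N}. 1 / real k ^ 2)"
    by simp
  then show ?case using step.IH new_term by linarith
qed simp

lemma primes_upto_inverse_squares: "(\<Sum>p\<in>primes_upto P. 1 / real p ^ 2) \<le> 1"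
proof (cases "P \<ge> 1")
  case True
  have "primes_upto P \<subseteq> {2..P}" unfolding primes_upto_def using prime_ge_2_nat by auto
  then have "(\<Sum>p\<in>primes_upto P. 1 / real p ^ 2) \<le> (\<Sum>k\<in>{2..P}. 1 / real k ^ 2)"
    by (intro sum_mono2) auto
  also have "\<dots> \<le> 1 - 1 / real P" by (rule sum_inverse_squares_le[OF True])
  also have "\<dots> \<le> 1" by simp
  finally show ?thesis .
next
  case False
  then have "primes_upto P = {}" unfolding primes_upto_def by (auto dest: prime_gt_0_nat)
  then show ?thesis by simp
qed

lemma reciprocal_sum_le_euler_product:
  assumes A: "finite A" "\<forall>p\<in>A. prime p" and M: "finite M"
    and smooth: "\<And>k. k \<in> M \<Longrightarrow> k > 0 \<and> prime_factors k \<subseteq> A \<and> (\<forall>p\<in>A. multiplicity p k < J)"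
  shows "(\<Sum>k\<in>M. 1 / real k) \<le> (\<Prod>p\<in>A. \<Sum>j<J. (1 / real p) ^ j)"
proof -
  define E where "E = PiE A (\<lambda>_. {..<J})"
  define \<phi> where "\<phi> g = (\<Prod>p\<in>A. p ^ g p)" for g :: "nat \<Rightarrow> nat"
  have mult_\<phi>: "multiplicity p (\<phi> g) = g p" if "p \<in> A" for p g
    using multiplicity_prod_prime_powers[where S = A and f = g] A that unfolding \<phi>_def by auto
  have inj: "inj_on \<phi> E"
    by (rule inj_onI) (metis E_def PiE_ext mult_\<phi>)
  have "M \<subseteq> \<phi> ` E"
  proof
    fix k assume k: "k \<in> M"
    let ?g = "restrict (\<lambda>p. multiplicity p k) A"
    have "\<phi> ?g = (\<Prod>p\<in>A. p ^ multiplicity p k)" unfolding \<phi>_def by simp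
    also have "\<dots> = (\<Prod>p\<in>prime_factors k. p ^ multiplicity p k)"
      using smooth[OF k] A by (intro prod.mono_neutral_right) (auto simp: prime_factors_multiplicity)
    also have "\<dots> = k" using smooth[OF k] by (simp add: prod_prime_factors)
    finally show "k \<in> \<phi> ` E" using smooth[OF k] unfolding E_def by (auto intro!: image_eqI[of _ _ ?g])
  qed
  then have "(\<Sum>k\<in>M. 1 / real k) \<le> (\<Sum>k\<in>\<phi> ` E. 1 / real k)"
    using A(1) by (intro sum_mono2) (auto simp: E_def finite_PiE)
  also have "\<dots> = (\<Sum>g\<in>E. 1 / real (\<phi> g))"
    by (simp add: sum.reindex[OF inj])
  also have "\<dots> = (\<Sum>g\<in>E. \<Prod>p\<in>A. (1 / real p) ^ g p)"
    by (simp add: \<phi>_def power_one_over prod_dividef)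
  also have "\<dots> = (\<Prod>p\<in>A. \<Sum>j<J. (1 / real p) ^ j)"
    unfolding E_def using A(1) by (simp add: prod_sum_PiE)
  finally show ?thesis .
qed

text \<open>Euler's product bounds the harmonic sum: \<open>log (P + 1) \<le> \<Prod>\<^sub>p\<^sub>\<le>\<^sub>P (1 - 1/p)\<inverse>\<close>.\<close>
lemma ln_le_euler_product:
  "ln (real P + 1) \<le> (\<Prod>p\<in>primes_upto P. 1 / (1 - 1 / real p))"
proof -
  let ?A = "primes_upto P"
  have Apr: "\<forall>p\<in>?A. prime p" unfolding primes_upto_def by auto
  have Ap2: "real p \<ge> 2" if "p \<in> ?A" for p using that prime_ge_2_nat unfolding primes_upto_def by force
  have smooth: "k > 0 \<and> prime_factors k \<subseteq> ?A \<and> (\<forall>p\<in>?A. multiplicity p k < P + 1)"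
    if k: "k \<in> {1..P}" for k
  proof (intro conjI ballI subsetI)
    fix p assume "p \<in> prime_factors k"
    then show "p \<in> ?A" using k dvd_imp_le[of p k] unfolding primes_upto_def by auto
  next
    fix p assume "p \<in> ?A"
    then have "2 ^ multiplicity p k \<le> p ^ multiplicity p k" using Ap2 by (simp add: power_mono)
    also have "\<dots> \<le> k" using k by (intro dvd_imp_le multiplicity_dvd) auto
    finally have "2 ^ multiplicity p k \<le> P" using k by simp
    then show "multiplicity p k < P + 1" using less_exp[of "multiplicity p k"] by linarith
  qed (use k in simp)
  have geometric: "(\<Sum>j<P+1. (1 / real p) ^ j) \<le> 1 / (1 - 1 / real p)" if "p \<in> ?A" for p
  proof -
    have x: "1 / real p \<noteq> 1" "1 / real p < 1" using Ap2[OF that] by auto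
    then have "(\<Sum>j<P+1. (1 / real p) ^ j) = (1 - (1 / real p) ^ (P+1)) / (1 - 1 / real p)"
      by (simp only: sum_gp_strict if_False)
    also have "\<dots> \<le> 1 / (1 - 1 / real p)" using x by (intro divide_right_mono) auto
    finally show ?thesis .
  qed
  have "ln (real P + 1) \<le> harm P" by (rule ln_le_harm)
  also have "(harm P :: real) = (\<Sum>k\<in>{1..P}. 1 / real k)" unfolding harm_def by (simp add: inverse_eq_divide)
  also have "\<dots> \<le> (\<Prod>p\<in>?A. \<Sum>j<P+1. (1 / real p) ^ j)"
    using smooth by (intro reciprocal_sum_le_euler_product primes_upto_finite Apr) auto
  also have "\<dots> \<le> (\<Prod>p\<in>?A. 1 / (1 - 1 / real p))"
    using geometric by (intro prod_mono conjI sum_nonneg) auto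
  finally show ?thesis .
qed

text \<open>Taking logarithms: \<open>log (1 - 1/p)\<inverse> \<le> 1/p + 2/p\<^sup>2\<close> for every prime \<open>p\<close>.\<close>
lemma ln_euler_product_le:
  assumes A: "finite A" "\<forall>p\<in>A. prime p"
  shows "ln (\<Prod>p\<in>A. 1 / (1 - 1 / real p))
           \<le> (\<Sum>p\<in>A. 1 / real p) + 2 * (\<Sum>p\<in>A. 1 / real p ^ 2)"
proof -
  have p2: "real p \<ge> 2" if "p \<in> A" for p using that A prime_ge_2_nat by force
  have "ln (\<Prod>p\<in>A. 1 / (1 - 1 / real p)) = (\<Sum>p\<in>A. ln (1 / (1 - 1 / real p)))"
    by (rule ln_prod[OF A(1)]) (use p2 in force)
  also have "\<dots> \<le> (\<Sum>p\<in>A. 1 / real p + 2 * (1 / real p ^ 2))"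
  proof (rule sum_mono)
    fix p assume p: "p \<in> A"
    have "- (1 / real p) - 2 * (1 / real p)\<^sup>2 \<le> ln (1 - 1 / real p)"
      using p2[OF p] by (intro ln_one_minus_pos_lower_bound) auto
    then show "ln (1 / (1 - 1 / real p)) \<le> 1 / real p + 2 * (1 / real p ^ 2)"
      using p2[OF p] by (simp add: ln_div power_one_over)
  qed
  also have "\<dots> = (\<Sum>p\<in>A. 1 / real p) + 2 * (\<Sum>p\<in>A. 1 / real p ^ 2)"
    by (simp add: sum.distrib sum_distrib_left)
  finally show ?thesis .
qed

lemma mertens_lower:
  assumes P: "P \<ge> 2"
  shows "ln (ln (real P + 1)) \<le> (\<Sum>p\<in>primes_upto P. 1 / real p) + 2"
proof -
  let ?E = "\<Prod>p\<in>primes_upto P. 1 / (1 - 1 / real p)"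
  have "0 < ln (real P + 1)" using P by simp
  then have "ln (ln (real P + 1)) \<le> ln ?E"
    using ln_le_euler_product[of P] by (intro ln_mono)
  also have "\<dots> \<le> (\<Sum>p\<in>primes_upto P. 1 / real p) + 2 * (\<Sum>p\<in>primes_upto P. 1 / real p ^ 2)"
    by (rule ln_euler_product_le) (auto simp: primes_upto_def)
  also have "\<dots> \<le> (\<Sum>p\<in>primes_upto P. 1 / real p) + 2"
    using primes_upto_inverse_squares[of P] by simp
  finally show ?thesis .
qed

text \<open>The modulus \<open>n\<close> built from the primes up to \<open>P\<close> with exponent \<open>K \<le> 5P\<close> is at most \<open>P\<^bsup>KP\<^esup>\<close>,
  so \<open>log n \<le> P\<^sup>5\<close> and \<open>log log n \<le> 5 log (P + 1)\<close>.\<close>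
lemma ln_ln_modulus_le:
  assumes P: "P \<ge> 3" and K: "K \<ge> 1" "real K \<le> 5 * real P"
  shows "ln (ln (real (modulus (primes_upto P) K))) \<le> 5 * ln (real P + 1)"
proof -
  let ?A = "primes_upto P" and ?n = "modulus (primes_upto P) K"
  have Afin: "finite ?A" and Apr: "\<forall>p\<in>?A. prime p" unfolding primes_upto_def by auto
  have "2 \<in> ?A" using P unfolding primes_upto_def by simp
  then have n2: "2 \<le> ?n" using member_le_modulus[OF Afin Apr _ K(1)] by blast
  have cardA: "card ?A \<le> P"
    using card_mono[of "{1..P}" ?A] prime_ge_1_nat unfolding primes_upto_def by force
  have "?n \<le> (\<Prod>p\<in>?A. P ^ K)" unfolding modulus_def
    by (intro prod_mono) (auto simp: primes_upto_def power_mono)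
  also have "\<dots> = P ^ (K * card ?A)" by (simp only: prod_constant power_mult)
  also have "\<dots> \<le> P ^ (K * P)" using P cardA by (intro power_increasing) auto
  finally have "real ?n \<le> real P ^ (K * P)" by (simp only: of_nat_power[symmetric] of_nat_le_iff)
  then have "ln (real ?n) \<le> real K * real P * ln (real P)"
    using n2 by (subst (asm) ln_le_cancel_iff[symmetric]) (auto simp: ln_realpow)
  also have "\<dots> \<le> (5 * real P) * real P * real P"
    using K P ln_le_minus_one[of "real P"] by (intro mult_mono) auto
  also have "\<dots> \<le> real P ^ 5"
  proof -
    have "5 * (real P * real P * real P) \<le> (real P * real P) * (real P * real P * real P)"
      using P mult_mono[of 3 "real P" 3 "real P"] by (intro mult_right_mono) auto
    then show ?thesis by (simp add: algebra_simps eval_nat_numeral)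
  qed
  finally have "ln (real ?n) \<le> real P ^ 5" .
  moreover have "0 < ln (real ?n)" using n2 by simp
  ultimately have "ln (ln (real ?n)) \<le> ln (real P ^ 5)" using P by (subst ln_le_cancel_iff) auto
  also have "\<dots> \<le> 5 * ln (real P + 1)" using P by (simp add: ln_realpow)
  finally show ?thesis .
qed

text \<open>Since \<open>e < 3\<close>, \<open>log log n\<close> is positive for \<open>n \<ge> 3\<close>.\<close>
lemma ln_ln_pos:
  assumes "3 \<le> n"
  shows "0 < ln (ln (real n))"
proof -
  have "exp 1 < real n" using assms e_less_272 by linarith
  then have "ln (exp 1) < ln (real n)" using assms by (subst ln_less_cancel_iff) auto
  then show ?thesis by simp
qed

lemma exp_decay_le_powr:
  fixes \<alpha> \<mu> X Y :: real
  assumes \<alpha>: "0 < \<alpha>" "\<alpha> \<le> 1" and Y: "ln Y \<le> \<mu> + 2" and X: "0 < X" "X \<le> 5 * Y"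
  shows "exp (- \<alpha> * \<mu>) \<le> exp 2 * 5 / X powr \<alpha>"
proof -
  have Y0: "0 < Y" using X by linarith
  have "exp (- \<alpha> * \<mu>) \<le> exp (2 * \<alpha> - \<alpha> * ln Y)"
    using mult_left_mono[OF Y, of \<alpha>] \<alpha> by (simp add: algebra_simps)
  also have "\<dots> = exp (2 * \<alpha>) / Y powr \<alpha>"
    using Y0 by (simp add: exp_diff powr_def mult.commute)
  also have "\<dots> \<le> exp 2 / (X / 5) powr \<alpha>"
    using X \<alpha> by (intro frac_le powr_mono2) auto
  also have "\<dots> = exp 2 * 5 powr \<alpha> / X powr \<alpha>"
    using X by (simp add: powr_divide)
  also have "\<dots> \<le> exp 2 * 5 / X powr \<alpha>"
    using powr_mono[of \<alpha> 1 5] \<alpha> X by (intro divide_right_mono mult_left_mono) auto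
  finally show ?thesis .
qed

text \<open>For every prime \<open>P \<ge> 3\<close> there is a modulus \<open>n \<ge> P\<close> whose deficit \<open>1 - D n\<close> is at most
  \<open>C\<^sub>0 (log log n)\<^sup>-\<^sup>\<alpha>\<close>: take the primes up to \<open>P\<close> and \<open>K = \<lceil>e \<mu>\<rceil> + 1\<close>.\<close>
lemma deficit_at_prime:
  assumes P: "prime P" "P \<ge> 3"
  shows "\<exists>n\<ge>P. 1 - D n \<le> (exp 4 + 1) * exp 2 * 5 / ln (ln (real n)) powr alpha"
proof -
  let ?A = "primes_upto P"
  define \<mu> where "\<mu> = (\<Sum>p\<in>?A. 1 / real p)"
  define K where "K = nat \<lceil>exp 1 * \<mu>\<rceil> + 1"
  define n where "n = modulus ?A K"
  have Afin: "finite ?A" and Apr: "\<forall>p\<in>?A. prime p" unfolding primes_upto_def by auto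
  have mu0: "\<mu> \<ge> 0" unfolding \<mu>_def by (intro sum_nonneg) auto
  have "\<mu> \<le> (\<Sum>p\<in>?A. 1)"
    unfolding \<mu>_def using Apr prime_ge_1_nat by (intro sum_mono) (auto simp: divide_le_eq_1)
  also have "\<dots> \<le> P"
    using card_mono[of "{1..P}" ?A] prime_ge_1_nat unfolding primes_upto_def by force
  finally have mu_P: "\<mu> \<le> real P" .
  have K: "K \<ge> 1" "exp 1 * \<mu> \<le> real K" unfolding K_def by linarith+
  have "exp 1 * \<mu> \<le> 3 * \<mu>" using mu0 e_less_272 by (intro mult_right_mono) auto
  then have "real K \<le> 5 * real P" unfolding K_def using mu_P P(2) by linarith
  then have lnln: "ln (ln (real n)) \<le> 5 * ln (real P + 1)"
    unfolding n_def using P(2) K(1) by (intro ln_ln_modulus_le) auto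
  have "P \<in> ?A" using P(1) unfolding primes_upto_def by simp
  then have nP: "P \<le> n" unfolding n_def using member_le_modulus[OF Afin Apr _ K(1)] by blast
  then have "0 < ln (ln (real n))" using P(2) by (intro ln_ln_pos) simp
  then have decay: "exp (- alpha * \<mu>) \<le> exp 2 * 5 / ln (ln (real n)) powr alpha"
    using alpha_bounds mertens_lower[of P] lnln P(2) unfolding \<mu>_def by (intro exp_decay_le_powr) auto
  have "1 - D n \<le> (exp 4 + 1) * exp (- alpha * \<mu>)"
    using Afin Apr primes_upto_inverse_squares K unfolding n_def \<mu>_def by (rule deficit_bound)
  also have "\<dots> \<le> (exp 4 + 1) * (exp 2 * 5 / ln (ln (real n)) powr alpha)"
    using decay by (intro mult_left_mono) (auto intro: add_nonneg_nonneg)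
  finally show ?thesis using nP by (intro exI[of _ n]) (simp add: mult.assoc)
qed

theorem theorem2p1:
  shows "\<exists>C::real. C > 0 \<and>
    infinite {n::nat. n > 0 \<and>
      D n > 1 - C / (ln (ln (real n))) powr (1 - exp 1 * ln 2 / 2)}"
proof -
  define C0 where "C0 = (exp 4 + 1) * exp 2 * (5::real)"
  define C where "C = 2 * C0"
  have C: "C > 0" unfolding C_def C0_def by (intro mult_pos_pos add_pos_pos) auto
  have "\<exists>n\<ge>m. n > 0 \<and> D n > 1 - C / ln (ln (real n)) powr alpha" for m
  proof -
    obtain P where P: "prime P" "P > max m 3" using bigger_prime by blast
    then obtain n where n: "P \<le> n" and Dn: "1 - D n \<le> C0 / ln (ln (real n)) powr alpha"
      using deficit_at_prime[of P] unfolding C0_def by auto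
    have "0 < ln (ln (real n))" using P n by (intro ln_ln_pos) simp
    then have "C0 / ln (ln (real n)) powr alpha < C / ln (ln (real n)) powr alpha"
      using C unfolding C_def by (simp add: divide_strict_right_mono)
    then show ?thesis using Dn n P by (intro exI[of _ n]) auto
  qed
  then show ?thesis
    using C unfolding infinite_nat_iff_unbounded_le alpha_def by (intro exI[of _ C]) auto
qed

end
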